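(* Fix $\beta\in\mathbb R$ and let $p_n=\frac12+r_n$ for $n\ge1$, with $r_n$ as in the context. Then $D(n)\sim n(\log\log n)^\beta$ as $n\to\infty$.
   Context: Fix $\beta\in\mathbb R$ and an integer $n_1\ge16$ such that $\frac14\left(\frac1n+\frac{1}{n(\log\log n)^\beta}\right)\in(0,1/2)$ for all $n\ge n_1$. Define $r_n=\frac14\left(\frac1n+\frac{1}{n(\log\log n)^\beta}\right)$ for $n\ge n_1$ and $r_n=r_{n_1}$ for $1\le n<n_1$. Consider the chain: $p_0=1$, $q_0=0$, $p_n=\frac12+r_n$, $q_n=1-p_n$ for $n\ge1$; $X=(X_k)_{k\ge0}$ is the Markov chain on $\mathbb Z_+$ with $X_0=0$, $\mathbb P(X_{k+1}=n+1\mid X_k=n)=p_n$, $\mathbb P(X_{k+1}=n-1\mid X_k=n)=q_n$. Let $\rho_k=q_k/p_k$ ($k\ge1$), and for $m\ge0$ let $D(m)=1+\sum_{j=1}^{\infty}\rho_{m+1}\cdots\rho_{m+j}$. *)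

theory Defs
  imports "HOL-Analysis.Analysis" "HOL-Library.Landau_Symbols"
begin

text \<open>r_n for n \<ge> n1, and r_n = r_{n1} for 1 \<le> n < n1 (realised via max n n1).\<close>
definition r_seq :: "real \<Rightarrow> nat \<Rightarrow> nat \<Rightarrow> real" where
  "r_seq \<beta> n1 n = (let m = real (max n n1) in
      (1/4) * (1 / m + 1 / (m * (ln (ln m)) powr \<beta>)))"

definition p_seq :: "real \<Rightarrow> nat \<Rightarrow> nat \<Rightarrow> real" where
  "p_seq \<beta> n1 n = (if n = 0 then 1 else 1/2 + r_seq \<beta> n1 n)"

definition q_seq :: "real \<Rightarrow> nat \<Rightarrow> nat \<Rightarrow> real" where
  "q_seq \<beta> n1 n = 1 - p_seq \<beta> n1 n"

definition rho_seq :: "real \<Rightarrow> nat \<Rightarrow> nat \<Rightarrow> real" where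
  "rho_seq \<beta> n1 k = q_seq \<beta> n1 k / p_seq \<beta> n1 k"

text \<open>D(m) = 1 + sum_{j>=1} rho_{m+1} ... rho_{m+j}; the summation index j' = j - 1 starts at 0.\<close>
definition D_fun :: "real \<Rightarrow> nat \<Rightarrow> nat \<Rightarrow> real" where
  "D_fun \<beta> n1 m = 1 + (\<Sum>j. \<Prod>i\<in>{1..Suc j}. rho_seq \<beta> n1 (m + i))"

end

theory Submission
  imports Defs "HOL-Real_Asymp.Real_Asymp"
begin

(* D solves the recursion D(m) = 1 + \<rho>(m+1) D(m+1). For G(x) = x (ln ln x)^\<beta> the drift is tuned so
   that 4 r(n) G(n) = (ln ln n)^\<beta> + 1 cancels G' up to the constant 1, hence
   G(m) - \<rho>(m+1) G(m+1) \<longrightarrow> 1. So c G is eventually a supersolution of the recursion for c > 1 and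
   a subsolution for c < 1, and iterating the recursion squeezes D between them. In the lower bound
   the remainder \<rho>(m+1)\<cdots>\<rho>(m+N) c G(m+N) must vanish; it does because G ln is an eventually
   \<rho>-decreasing weight that beats G by a factor ln. *)

definition tail_prod :: "(nat \<Rightarrow> real) \<Rightarrow> nat \<Rightarrow> nat \<Rightarrow> real" where
  "tail_prod \<rho> m j = (\<Prod>i\<in>{1..j}. \<rho> (m + i))"

lemma tail_prod_0 [simp]: "tail_prod \<rho> m 0 = 1"
  by (simp add: tail_prod_def)

lemma tail_prod_Suc: "tail_prod \<rho> m (Suc j) = tail_prod \<rho> m j * \<rho> (m + Suc j)"
  by (simp add: tail_prod_def atLeastAtMostSuc_conv mult.commute)

lemma tail_prod_add: "tail_prod \<rho> m (d + j) = tail_prod \<rho> m d * tail_prod \<rho> (m + d) j"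
  by (induction j) (simp_all add: tail_prod_Suc algebra_simps)

lemma tail_prod_nonneg: "(\<And>k. 0 \<le> \<rho> k) \<Longrightarrow> 0 \<le> tail_prod \<rho> m j"
  unfolding tail_prod_def by (intro prod_nonneg) auto

lemma asymp_equiv_if_within_factors:
  fixes f g :: "'a \<Rightarrow> real"
  assumes "eventually (\<lambda>x. 0 < g x) F"
    and "\<And>c. c > 1 \<Longrightarrow> eventually (\<lambda>x. f x \<le> c * g x) F"
    and "\<And>c. c < 1 \<Longrightarrow> eventually (\<lambda>x. c * g x \<le> f x) F"
  shows "f \<sim>[F] g"
proof (rule asymp_equivI', rule tendstoI)
  fix e :: real
  assume "e > 0"
  have "1 < 1 + e/2" "1 - e/2 < 1"
    using \<open>e > 0\<close> by simp_all
  from assms(1) assms(2)[OF this(1)] assms(3)[OF this(2)]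
  show "eventually (\<lambda>x. dist (f x / g x) 1 < e) F"
  proof eventually_elim
    case (elim x)
    then have bound: "\<bar>f x - g x\<bar> \<le> e/2 * g x"
      by (intro abs_leI) (simp_all add: algebra_simps)
    have "f x / g x - 1 = (f x - g x) / g x"
      using elim(1) by (simp add: diff_divide_distrib)
    then have "\<bar>f x / g x - 1\<bar> = \<bar>f x - g x\<bar> / g x"
      using elim(1) by simp
    also have "\<dots> \<le> e/2"
      using bound elim(1) by (simp only: pos_divide_le_eq)
    finally have "\<bar>f x / g x - 1\<bar> \<le> e/2" .
    with \<open>e > 0\<close> show ?case
      by (simp add: dist_real_def)
  qed
qed

context
  fixes \<rho> :: "nat \<Rightarrow> real"
  assumes \<rho>_nonneg: "\<And>k. 0 \<le> \<rho> k"
begin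

lemma tail_sum_le_supersolution:
  assumes "\<forall>k\<ge>m. 1 + \<rho> (Suc k) * g (Suc k) \<le> g k"
  shows "(\<Sum>j<N. tail_prod \<rho> m j) + tail_prod \<rho> m N * g (m + N) \<le> g m"
proof (induction N)
  case (Suc N)
  have "tail_prod \<rho> m N * (1 + \<rho> (Suc (m + N)) * g (Suc (m + N))) \<le> tail_prod \<rho> m N * g (m + N)"
    using assms tail_prod_nonneg[OF \<rho>_nonneg] by (intro mult_left_mono) auto
  with Suc show ?case by (simp add: tail_prod_Suc algebra_simps)
qed simp

lemma tail_sum_ge_subsolution:
  assumes "\<forall>k\<ge>m. g k \<le> 1 + \<rho> (Suc k) * g (Suc k)"
  shows "g m \<le> (\<Sum>j<N. tail_prod \<rho> m j) + tail_prod \<rho> m N * g (m + N)"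
proof (induction N)
  case (Suc N)
  have "tail_prod \<rho> m N * g (m + N) \<le> tail_prod \<rho> m N * (1 + \<rho> (Suc (m + N)) * g (Suc (m + N)))"
    using assms tail_prod_nonneg[OF \<rho>_nonneg] by (intro mult_left_mono) auto
  with Suc show ?case by (simp add: tail_prod_Suc algebra_simps)
qed simp

lemma tail_prod_mult_le_weight:
  assumes "\<forall>k\<ge>m. \<rho> (Suc k) * h (Suc k) \<le> h k"
  shows "tail_prod \<rho> m N * h (m + N) \<le> h m"
proof (induction N)
  case (Suc N)
  have "tail_prod \<rho> m N * (\<rho> (Suc (m + N)) * h (Suc (m + N))) \<le> tail_prod \<rho> m N * h (m + N)"
    using assms tail_prod_nonneg[OF \<rho>_nonneg] by (intro mult_left_mono) auto
  with Suc show ?case by (simp add: tail_prod_Suc algebra_simps)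
qed simp

lemma
  assumes super: "\<forall>k\<ge>M. 1 + \<rho> (Suc k) * g (Suc k) \<le> g k" and g_nonneg: "\<forall>k\<ge>M. 0 \<le> g k"
  shows summable_tail_prod: "summable (tail_prod \<rho> m)"
    and suminf_tail_prod_le_supersolution: "m \<ge> M \<Longrightarrow> suminf (tail_prod \<rho> m) \<le> g m"
proof -
  have partial_le: "(\<Sum>j<N. tail_prod \<rho> m' j) \<le> g m'" if "m' \<ge> M" for m' N
  proof -
    have "0 \<le> tail_prod \<rho> m' N * g (m' + N)"
      using that g_nonneg tail_prod_nonneg[OF \<rho>_nonneg] by simp
    with tail_sum_le_supersolution[of m' g N] super that show ?thesis by simp
  qed
  have summable_from_M: "summable (tail_prod \<rho> m')" if "m' \<ge> M" for m'
  proof (rule bounded_imp_summable)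
    show "0 \<le> tail_prod \<rho> m' n" for n
      by (rule tail_prod_nonneg[OF \<rho>_nonneg])
    show "(\<Sum>j\<le>n. tail_prod \<rho> m' j) \<le> g m'" for n
      using partial_le[OF that, of "Suc n"] by (simp add: lessThan_Suc_atMost)
  qed
  define d where "d = M - m"
  have "summable (\<lambda>j. tail_prod \<rho> m d * tail_prod \<rho> (m + d) j)"
    using summable_from_M[of "m + d"] by (intro summable_mult) (simp add: d_def)
  then have "summable (\<lambda>j. tail_prod \<rho> m (j + d))"
    by (simp only: tail_prod_add[of \<rho> m d] add.commute[of _ d])
  then show "summable (tail_prod \<rho> m)"
    by simp
  show "suminf (tail_prod \<rho> m) \<le> g m" if "m \<ge> M"
    using partial_le[OF that] summable_from_M[OF that] by (intro suminf_le_const)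
qed

lemma subsolution_le_suminf_tail_prod:
  assumes "summable (tail_prod \<rho> m)"
    and "\<forall>k\<ge>m. g k \<le> 1 + \<rho> (Suc k) * g (Suc k)"
    and "(\<lambda>N. tail_prod \<rho> m N * g (m + N)) \<longlonglongrightarrow> 0"
  shows "g m \<le> suminf (tail_prod \<rho> m)"
proof -
  have "(\<lambda>N. (\<Sum>j<N. tail_prod \<rho> m j) + tail_prod \<rho> m N * g (m + N)) \<longlonglongrightarrow> suminf (tail_prod \<rho> m) + 0"
    using assms(1,3) by (intro tendsto_add summable_LIMSEQ)
  with tail_sum_ge_subsolution[OF assms(2)] show ?thesis
    by (intro tendsto_le[OF _ _ tendsto_const]) auto
qed

lemma eventually_supersolution_scaled:
  assumes "(\<lambda>k. g k - \<rho> (Suc k) * g (Suc k)) \<longlonglongrightarrow> 1" and "c > 1"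
  shows "eventually (\<lambda>k. 1 + \<rho> (Suc k) * (c * g (Suc k)) \<le> c * g k) at_top"
proof -
  have "(\<lambda>k. c * (g k - \<rho> (Suc k) * g (Suc k))) \<longlonglongrightarrow> c * 1"
    using assms(1) by (rule tendsto_mult_left)
  then have "eventually (\<lambda>k. 1 < c * (g k - \<rho> (Suc k) * g (Suc k))) at_top"
    using assms(2) by (intro order_tendstoD) auto
  then show ?thesis
    by eventually_elim (simp add: algebra_simps)
qed

lemma eventually_subsolution_scaled:
  assumes "(\<lambda>k. g k - \<rho> (Suc k) * g (Suc k)) \<longlonglongrightarrow> 1" and "c < 1"
  shows "eventually (\<lambda>k. c * g k \<le> 1 + \<rho> (Suc k) * (c * g (Suc k))) at_top"
proof -
  have "(\<lambda>k. c * (g k - \<rho> (Suc k) * g (Suc k))) \<longlonglongrightarrow> c * 1"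
    using assms(1) by (rule tendsto_mult_left)
  then have "eventually (\<lambda>k. c * (g k - \<rho> (Suc k) * g (Suc k)) < 1) at_top"
    using assms(2) by (intro order_tendstoD) auto
  then show ?thesis
    by eventually_elim (simp add: algebra_simps)
qed

lemma tail_prod_mult_tendsto_0:
  assumes weight: "\<forall>k\<ge>m. \<rho> (Suc k) * h (Suc k) \<le> h k" "\<forall>k\<ge>m. 0 < h k"
    and "(\<lambda>k. g k / h k) \<longlonglongrightarrow> 0"
  shows "(\<lambda>N. tail_prod \<rho> m N * g (m + N)) \<longlonglongrightarrow> 0"
proof (rule Lim_null_comparison)
  show "(\<lambda>N. h m * \<bar>g (m + N) / h (m + N)\<bar>) \<longlonglongrightarrow> 0"
    using tendsto_rabs_zero[OF LIMSEQ_ignore_initial_segment[OF assms(3), of m]]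
    by (intro tendsto_mult_right_zero) (simp add: add.commute)
  show "\<forall>\<^sub>F N in sequentially. norm (tail_prod \<rho> m N * g (m + N)) \<le> h m * \<bar>g (m + N) / h (m + N)\<bar>"
  proof (intro always_eventually allI)
    fix N
    have pos: "0 < h (m + N)" and nonneg: "0 \<le> tail_prod \<rho> m N"
      using weight(2) tail_prod_nonneg[OF \<rho>_nonneg] by auto
    have "norm (tail_prod \<rho> m N * g (m + N)) = tail_prod \<rho> m N * h (m + N) * \<bar>g (m + N) / h (m + N)\<bar>"
      using pos nonneg by (simp add: abs_mult)
    also have "\<dots> \<le> h m * \<bar>g (m + N) / h (m + N)\<bar>"
      using tail_prod_mult_le_weight[OF weight(1)] by (intro mult_right_mono) auto
    finally show "norm (tail_prod \<rho> m N * g (m + N)) \<le> h m * \<bar>g (m + N) / h (m + N)\<bar>" .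
  qed
qed

lemma tail_series_asymp_equiv:
  assumes diff_lim: "(\<lambda>k. g k - \<rho> (Suc k) * g (Suc k)) \<longlonglongrightarrow> 1"
    and g_pos: "eventually (\<lambda>k. 0 < g k) at_top"
    and weight: "eventually (\<lambda>k. \<rho> (Suc k) * h (Suc k) \<le> h k) at_top"
    and h_pos: "eventually (\<lambda>k. 0 < h k) at_top"
    and ratio: "(\<lambda>k. g k / h k) \<longlonglongrightarrow> 0"
  shows "(\<forall>m. summable (tail_prod \<rho> m)) \<and> (\<lambda>m. suminf (tail_prod \<rho> m)) \<sim>[at_top] g"
proof -
  have supersolution: "\<exists>M. (\<forall>k\<ge>M. 1 + \<rho> (Suc k) * (c * g (Suc k)) \<le> c * g k) \<and> (\<forall>k\<ge>M. 0 \<le> c * g k)"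
    if "c > 1" for c
  proof -
    from eventually_supersolution_scaled[OF diff_lim that] g_pos
    have "eventually (\<lambda>k. 1 + \<rho> (Suc k) * (c * g (Suc k)) \<le> c * g k \<and> 0 \<le> c * g k) at_top"
      by eventually_elim (use that in simp)
    then show ?thesis
      by (auto simp: eventually_at_top_linorder)
  qed
  have summable: "\<forall>m. summable (tail_prod \<rho> m)"
    using supersolution[of 2] summable_tail_prod by auto
  have "(\<lambda>m. suminf (tail_prod \<rho> m)) \<sim>[at_top] g"
  proof (rule asymp_equiv_if_within_factors[OF g_pos])
    fix c :: real
    assume "c > 1"
    then obtain M where "\<forall>k\<ge>M. 1 + \<rho> (Suc k) * (c * g (Suc k)) \<le> c * g k" "\<forall>k\<ge>M. 0 \<le> c * g k"
      using supersolution by blast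
    then show "eventually (\<lambda>m. suminf (tail_prod \<rho> m) \<le> c * g m) at_top"
      using suminf_tail_prod_le_supersolution[of M "\<lambda>k. c * g k"]
      by (auto simp: eventually_at_top_linorder)
  next
    fix c :: real
    assume "c < 1"
    from eventually_subsolution_scaled[OF diff_lim this] weight h_pos
    have "eventually (\<lambda>k. c * g k \<le> 1 + \<rho> (Suc k) * (c * g (Suc k))
        \<and> \<rho> (Suc k) * h (Suc k) \<le> h k \<and> 0 < h k) at_top"
      by eventually_elim simp
    then obtain M where sub: "\<forall>k\<ge>M. c * g k \<le> 1 + \<rho> (Suc k) * (c * g (Suc k))"
      and weight_M: "\<forall>k\<ge>M. \<rho> (Suc k) * h (Suc k) \<le> h k" "\<forall>k\<ge>M. 0 < h k"
      by (auto simp: eventually_at_top_linorder)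
    have "c * g m \<le> suminf (tail_prod \<rho> m)" if "m \<ge> M" for m
    proof (rule subsolution_le_suminf_tail_prod)
      show "summable (tail_prod \<rho> m)"
        using summable by blast
      show "\<forall>k\<ge>m. c * g k \<le> 1 + \<rho> (Suc k) * (c * g (Suc k))"
        using sub that by auto
      have "(\<lambda>N. tail_prod \<rho> m N * g (m + N)) \<longlonglongrightarrow> 0"
        using weight_M that by (intro tail_prod_mult_tendsto_0[OF _ _ ratio]) auto
      then show "(\<lambda>N. tail_prod \<rho> m N * (c * g (m + N))) \<longlonglongrightarrow> 0"
        using tendsto_mult_right_zero[of _ sequentially c] by (simp add: algebra_simps)
    qed
    then show "eventually (\<lambda>m. c * g m \<le> suminf (tail_prod \<rho> m)) at_top"
      by (auto simp: eventually_at_top_linorder)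
  qed
  with summable show ?thesis ..
qed

end

definition growth :: "real \<Rightarrow> real \<Rightarrow> real" where
  "growth \<beta> x = x * ln (ln x) powr \<beta>"

definition drift :: "real \<Rightarrow> real \<Rightarrow> real" where
  "drift \<beta> x = (1/4) * (1 / x + 1 / (x * ln (ln x) powr \<beta>))"

definition drift_ratio :: "real \<Rightarrow> real \<Rightarrow> real" where
  "drift_ratio \<beta> x = (1/2 - drift \<beta> x) / (1/2 + drift \<beta> x)"

(* real_asymp needs the sign of \<beta> to know which terms of the expansion dominate. *)
lemma growth_diff_tendsto_1:
  "(\<lambda>k. growth \<beta> (real k) - drift_ratio \<beta> (real (Suc k)) * growth \<beta> (real (Suc k))) \<longlonglongrightarrow> 1"
proof -
  consider "\<beta> < 0" | "\<beta> = 0" | "\<beta> > 0" by linarith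
  then show ?thesis
    unfolding growth_def drift_ratio_def drift_def by cases real_asymp+
qed

lemma eventually_growth_log_weight:
  "eventually (\<lambda>k. drift_ratio \<beta> (real (Suc k)) * (growth \<beta> (real (Suc k)) * ln (real (Suc k)))
     \<le> growth \<beta> (real k) * ln (real k)) at_top"
proof -
  consider "\<beta> < 0" | "\<beta> = 0" | "\<beta> > 0" by linarith
  then show ?thesis
    unfolding growth_def drift_ratio_def drift_def by cases real_asymp+
qed

lemma eventually_growth_pos: "eventually (\<lambda>k. 0 < growth \<beta> (real k)) at_top"
  unfolding growth_def by real_asymp

lemma eventually_growth_log_pos: "eventually (\<lambda>k. 0 < growth \<beta> (real k) * ln (real k)) at_top"
  unfolding growth_def by real_asymp

lemma growth_over_growth_log_tendsto_0:
  "(\<lambda>k. growth \<beta> (real k) / (growth \<beta> (real k) * ln (real k))) \<longlonglongrightarrow> 0"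
  unfolding growth_def by real_asymp

lemma r_seq_eq_drift: "r_seq \<beta> n1 k = drift \<beta> (real (max k n1))"
  by (simp add: r_seq_def drift_def Let_def)

lemma rho_seq_eq_drift_ratio: "k \<ge> 1 \<Longrightarrow> rho_seq \<beta> n1 k = drift_ratio \<beta> (real (max k n1))"
  by (simp add: rho_seq_def q_seq_def p_seq_def r_seq_eq_drift drift_ratio_def)

lemma rho_seq_nonneg:
  assumes "\<forall>n\<ge>n1. 0 < drift \<beta> (real n) \<and> drift \<beta> (real n) < 1/2"
  shows "0 \<le> rho_seq \<beta> n1 k"
proof (cases "k = 0")
  case True
  then show ?thesis by (simp add: rho_seq_def q_seq_def p_seq_def)
next
  case False
  have "0 < drift \<beta> (real (max k n1)) \<and> drift \<beta> (real (max k n1)) < 1/2"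
    using assms by simp
  with False show ?thesis
    by (simp add: rho_seq_eq_drift_ratio drift_ratio_def)
qed

lemma D_fun_eq_suminf_tail_prod:
  assumes "summable (tail_prod (rho_seq \<beta> n1) m)"
  shows "D_fun \<beta> n1 m = suminf (tail_prod (rho_seq \<beta> n1) m)"
proof -
  have "(\<lambda>j. \<Prod>i\<in>{1..Suc j}. rho_seq \<beta> n1 (m + i)) = (\<lambda>j. tail_prod (rho_seq \<beta> n1) m (Suc j))"
    by (simp add: tail_prod_def)
  then show ?thesis
    using suminf_split_head[OF assms] by (simp add: D_fun_def)
qed

theorem lemma1:
  fixes \<beta> :: real and n1 :: nat
  assumes "n1 \<ge> 16"
    and "\<forall>n\<ge>n1. 0 < (1/4) * (1 / real n + 1 / (real n * (ln (ln (real n))) powr \<beta>))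
                 \<and> (1/4) * (1 / real n + 1 / (real n * (ln (ln (real n))) powr \<beta>)) < 1/2"
  shows "(\<forall>m. summable (\<lambda>j. \<Prod>i\<in>{1..Suc j}. rho_seq \<beta> n1 (m + i)))
         \<and> (\<lambda>n. D_fun \<beta> n1 n) \<sim>[at_top] (\<lambda>n. real n * (ln (ln (real n))) powr \<beta>)"
proof -
  let ?\<rho> = "rho_seq \<beta> n1"
  have \<rho>_nonneg: "\<And>k. 0 \<le> ?\<rho> k"
    using assms(2) by (intro rho_seq_nonneg) (simp add: drift_def)
  have \<rho>_eq: "eventually (\<lambda>k. ?\<rho> (Suc k) = drift_ratio \<beta> (real (Suc k))) at_top"
    using eventually_ge_at_top[of n1] by eventually_elim (simp add: rho_seq_eq_drift_ratio)
  have "(\<forall>m. summable (tail_prod ?\<rho> m)) \<and> (\<lambda>m. suminf (tail_prod ?\<rho> m)) \<sim>[at_top] (\<lambda>k. growth \<beta> (real k))"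
  proof (rule tail_series_asymp_equiv[OF \<rho>_nonneg _ eventually_growth_pos _ eventually_growth_log_pos
        growth_over_growth_log_tendsto_0])
    show "(\<lambda>k. growth \<beta> (real k) - ?\<rho> (Suc k) * growth \<beta> (real (Suc k))) \<longlonglongrightarrow> 1"
      using growth_diff_tendsto_1 by (rule Lim_transform_eventually) (use \<rho>_eq in \<open>eventually_elim, simp\<close>)
    show "eventually (\<lambda>k. ?\<rho> (Suc k) * (growth \<beta> (real (Suc k)) * ln (real (Suc k)))
        \<le> growth \<beta> (real k) * ln (real k)) at_top"
      using eventually_growth_log_weight \<rho>_eq by eventually_elim simp
  qed
  moreover have "summable (\<lambda>j. \<Prod>i\<in>{1..Suc j}. ?\<rho> (m + i)) \<longleftrightarrow> summable (tail_prod ?\<rho> m)" for m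
    using summable_Suc_iff[of "tail_prod ?\<rho> m"] by (simp add: tail_prod_def)
  ultimately show ?thesis
    by (simp add: D_fun_eq_suminf_tail_prod growth_def)
qed

end
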